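(* There exists a constant $C$ such that for all $x,y\in[0,1]$, $\zeta(xy)\leq C\,\zeta(x)\,\zeta(y)$.
   Context: $\zeta(x)=\frac{1}{2\sqrt2}\int_0^x\sqrt{\frac{\log(1+u^{-2})}{u}}\,du$ for $x\geq0$. *)

theory Defs
  imports "HOL-Analysis.Analysis"
begin

definition zeta :: "real \<Rightarrow> real" where
  "zeta x = 1 / (2 * sqrt 2) * integral {0..x} (\<lambda>u. sqrt (ln (1 + u powr (-2)) / u))"

end

theory Submission
  imports Defs
begin

text \<open>
  Let \<open>f u = sqrt (ln (1 + 1/u\<^sup>2) / u)\<close> be the integrand of \<open>\<zeta>\<close>. For \<open>a, b \<in> (0,1]\<close>,
  \<open>1 + 1/(ab)\<^sup>2 \<le> (1 + 1/a\<^sup>2)(1 + 1/b\<^sup>2)\<close>, so \<open>ln (1 + 1/(ab)\<^sup>2) \<le> s + t\<close> where \<open>s, t \<ge> ln 2\<close>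
  are the logarithms of the two factors; hence \<open>s + t \<le> (2 / ln 2) s t\<close>, i.e.
  \<open>f (ab) \<le> K f a f b\<close> with \<open>K = sqrt (2 / ln 2)\<close>. Substituting \<open>u = x v\<close>,
  \<open>\<integral>\<^sub>0\<^sup>x\<^sup>y f = x \<integral>\<^sub>0\<^sup>y f (x v) dv \<le> K (x f x) \<integral>\<^sub>0\<^sup>y f\<close>, and \<open>x f x \<le> \<integral>\<^sub>0\<^sup>x f\<close> because \<open>f\<close> is
  decreasing. The integrals exist since \<open>ln (1 + 1/u\<^sup>2) \<le> 4 ln (1 + 1/sqrt u) \<le> 4 / sqrt u\<close>,
  which gives \<open>f u \<le> 2 u powr (-3/4)\<close>.
\<close>

definition zeta_integrand :: "real \<Rightarrow> real" where
  "zeta_integrand u = sqrt (ln (1 + u powr (-2)) / u)"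

lemma zeta_eq_integral: "zeta x = integral {0..x} zeta_integrand / (2 * sqrt 2)"
  unfolding zeta_def zeta_integrand_def by simp

lemma zeta_integrand_eq: "u > 0 \<Longrightarrow> zeta_integrand u = sqrt (ln (1 + 1 / u\<^sup>2) / u)"
  unfolding zeta_integrand_def by (simp add: powr_minus powr_realpow divide_inverse)

lemma zeta_integrand_nonneg: "u \<ge> 0 \<Longrightarrow> zeta_integrand u \<ge> 0"
  unfolding zeta_integrand_def by simp

lemma one_plus_inverse_square_pos: "0 < 1 + 1 / (u::real)\<^sup>2"
  by (simp add: add_pos_nonneg)

lemma continuous_on_zeta_integrand: "continuous_on {0<..} zeta_integrand"
proof -
  have "continuous_on {0<..} (\<lambda>u. sqrt (ln (1 + 1 / u\<^sup>2) / u))"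
    by (intro continuous_intros) (auto simp: one_plus_inverse_square_pos[THEN less_imp_neq, THEN not_sym])
  then show ?thesis
    by (rule continuous_on_cong[THEN iffD1, rotated 2]) (auto simp: zeta_integrand_eq)
qed

lemma zeta_integrand_antimono:
  assumes "0 < u" "u \<le> v"
  shows "zeta_integrand v \<le> zeta_integrand u"
proof -
  have "ln (1 + 1 / v\<^sup>2) \<le> ln (1 + 1 / u\<^sup>2)"
    using assms by (simp add: add_pos_nonneg frac_le power_mono)
  then have "ln (1 + 1 / v\<^sup>2) / v \<le> ln (1 + 1 / u\<^sup>2) / u"
    using assms by (intro frac_le) auto
  then show ?thesis
    using assms by (simp add: zeta_integrand_eq)
qed

lemma ln_one_plus_inverse_square_le:
  fixes u :: real
  assumes "0 < u"
  shows "ln (1 + 1 / u\<^sup>2) \<le> 4 / sqrt u"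
proof -
  define s where "s = 1 / sqrt u"
  have s: "0 < s" "s ^ 4 = 1 / u\<^sup>2"
    using assms by (simp_all add: s_def power_divide power4_eq_xxxx power2_eq_square)
  have "1 + s ^ 4 \<le> (1 + s) ^ 4"
    using s(1) by (simp add: power4_eq_xxxx algebra_simps)
  then have "ln (1 + 1 / u\<^sup>2) \<le> ln ((1 + s) ^ 4)"
    using s by (simp add: add_pos_nonneg)
  also have "\<dots> = 4 * ln (1 + s)"
    using s by (simp add: ln_realpow)
  also have "\<dots> \<le> 4 * s"
    using s by (simp add: ln_add_one_self_le_self)
  finally show ?thesis
    by (simp add: s_def)
qed

lemma zeta_integrand_le_powr:
  assumes "0 < u"
  shows "zeta_integrand u \<le> 2 * u powr (-3/4)"
proof -
  have "(u powr (-3/4))\<^sup>2 = u powr (-3/2)"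
    using assms by (simp add: powr_power)
  also have "\<dots> = 1 / (u * sqrt u)"
    using assms powr_add[of u 1 "1/2"] by (simp add: powr_minus_divide powr_half_sqrt)
  finally have "(2 * u powr (-3/4))\<^sup>2 = 4 / (u * sqrt u)"
    by (simp add: power_mult_distrib)
  moreover have "ln (1 + 1 / u\<^sup>2) / u \<le> 4 / (u * sqrt u)"
    using ln_one_plus_inverse_square_le[OF assms] assms by (simp add: field_simps)
  ultimately show ?thesis
    using assms by (simp add: zeta_integrand_eq real_le_lsqrt)
qed

lemma zeta_integrand_integrable: "zeta_integrand integrable_on {0..x}"
proof -
  have "zeta_integrand integrable_on {0<..1}"
  proof (rule measurable_bounded_by_integrable_imp_integrable_real)
    show "zeta_integrand \<in> borel_measurable (lebesgue_on {0<..1})"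
      by (rule continuous_imp_measurable_on_sets_lebesgue
          [OF continuous_on_subset[OF continuous_on_zeta_integrand]]) auto
    show "(\<lambda>u::real. 2 * u powr (-3/4)) integrable_on {0<..1}"
      using integrable_on_powr_from_0'[of "-3/4" 1] by simp
    show "\<bar>zeta_integrand u\<bar> \<le> 2 * u powr (-3/4)" if "u \<in> {0<..1}" for u
      using that zeta_integrand_nonneg[of u] zeta_integrand_le_powr[of u] by simp
  qed simp
  moreover have "negligible (({0<..1} - {0..1}) \<union> ({0..1} - {0<..1::real}))"
    by (rule negligible_subset[OF negligible_sing[of 0]]) auto
  ultimately have "zeta_integrand integrable_on {0..1}"
    using integrable_spike_set_eq by blast
  moreover have "zeta_integrand integrable_on {1..max 1 x}"
    by (rule integrable_continuous_interval
        [OF continuous_on_subset[OF continuous_on_zeta_integrand]]) auto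
  ultimately have "zeta_integrand integrable_on {0..max 1 x}"
    by (rule Henstock_Kurzweil_Integration.integrable_combine[rotated 2]) auto
  then show ?thesis
    by (rule integrable_subinterval_real) auto
qed

lemma add_le_mult_of_ge:
  fixes c s t :: real
  assumes "0 < c" "c \<le> s" "c \<le> t"
  shows "s + t \<le> 2 / c * (s * t)"
proof -
  have "c * s \<le> s * t" "c * t \<le> s * t"
    using assms by (simp_all add: mult_right_mono mult_left_mono mult.commute)
  then have "c * (s + t) \<le> 2 * (s * t)"
    unfolding distrib_left by linarith
  then show ?thesis
    using assms by (simp add: field_simps)
qed

lemma ln_one_plus_inverse_square_mult_le:
  fixes a b :: real
  assumes "0 < a" "a \<le> 1" "0 < b" "b \<le> 1"
  shows "ln (1 + 1 / (a * b)\<^sup>2) \<le> 2 / ln 2 * (ln (1 + 1 / a\<^sup>2) * ln (1 + 1 / b\<^sup>2))"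
proof -
  have ln2_le: "ln 2 \<le> ln (1 + 1 / u\<^sup>2)" if "0 < u" "u \<le> 1" for u :: real
    using that power_le_one[of u 2]
    by (subst ln_le_cancel_iff) (auto simp: le_divide_eq add_pos_nonneg)
  have "ln (1 + 1 / (a * b)\<^sup>2) \<le> ln ((1 + 1 / a\<^sup>2) * (1 + 1 / b\<^sup>2))"
    using assms one_plus_inverse_square_pos[of a] one_plus_inverse_square_pos[of b]
    by (simp add: add_pos_nonneg field_simps power_mult_distrib)
  also have "\<dots> = ln (1 + 1 / a\<^sup>2) + ln (1 + 1 / b\<^sup>2)"
    using one_plus_inverse_square_pos[of a] one_plus_inverse_square_pos[of b]
    by (simp add: ln_mult)
  also have "\<dots> \<le> 2 / ln 2 * (ln (1 + 1 / a\<^sup>2) * ln (1 + 1 / b\<^sup>2))"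
    using assms ln2_le[of a] ln2_le[of b] by (intro add_le_mult_of_ge) auto
  finally show ?thesis .
qed

lemma zeta_integrand_mult_le:
  assumes "0 \<le> a" "a \<le> 1" "0 \<le> b" "b \<le> 1"
  shows "zeta_integrand (a * b) \<le> sqrt (2 / ln 2) * zeta_integrand a * zeta_integrand b"
proof (cases "a = 0 \<or> b = 0")
  case True
  \<comment> \<open>\<open>0 powr -2 = 0\<close>, so \<open>zeta_integrand 0 = 0\<close>\<close>
  then show ?thesis
    using assms by (auto simp: zeta_integrand_def zeta_integrand_nonneg)
next
  case False
  with assms have ab: "0 < a" "0 < b"
    by auto
  have "zeta_integrand (a * b) = sqrt (ln (1 + 1 / (a * b)\<^sup>2) / (a * b))"
    using ab by (simp add: zeta_integrand_eq)
  also have "\<dots> \<le> sqrt (2 / ln 2 * (ln (1 + 1 / a\<^sup>2) * ln (1 + 1 / b\<^sup>2)) / (a * b))"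
    using ln_one_plus_inverse_square_mult_le[of a b] assms ab
    by (intro real_sqrt_le_mono divide_right_mono) auto
  also have "\<dots> = sqrt (2 / ln 2) * zeta_integrand a * zeta_integrand b"
    using ab by (simp add: zeta_integrand_eq real_sqrt_mult[symmetric])
  finally show ?thesis .
qed

lemma mult_le_integral_of_antimono:
  fixes f :: "real \<Rightarrow> real"
  assumes "f integrable_on {0..x}" "0 \<le> x"
    and antimono: "\<And>u. 0 < u \<Longrightarrow> u \<le> x \<Longrightarrow> f x \<le> f u"
  shows "x * f x \<le> integral {0..x} f"
proof -
  define g where "g u = (if u = 0 then f x else f u)" for u
  have "integral {0..x} g = integral {0..x} f"
    by (rule integral_spike[of "{0}"]) (auto simp: g_def)
  moreover have "g integrable_on {0..x}"
    by (rule integrable_spike[OF assms(1), of "{0}"]) (auto simp: g_def)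
  then have "integral {0..x} (\<lambda>u. f x) \<le> integral {0..x} g"
    by (rule integral_le[rotated]) (auto simp: g_def antimono)
  ultimately show ?thesis
    using assms(2) by simp
qed

lemma integral_stretch_from_0:
  fixes f :: "real \<Rightarrow> real"
  assumes "0 < m"
  shows "integral {0..m * y} f = m * integral {0..y} (\<lambda>v. f (m * v))"
  using integral_stretch_real[of m 0 "m * y" f] assms by simp

lemma integrable_stretch_from_0:
  fixes f :: "real \<Rightarrow> real"
  assumes "f integrable_on {0..m * y}" "0 < m"
  shows "(\<lambda>v. f (m * v)) integrable_on {0..y}"
  using integrable_stretch_real[OF assms(1), of m] assms(2) by simp

lemma integral_zeta_integrand_mult_le:
  assumes "0 \<le> x" "x \<le> 1" "0 \<le> y" "y \<le> 1"
  shows "integral {0..x * y} zeta_integrand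
           \<le> sqrt (2 / ln 2) * integral {0..x} zeta_integrand * integral {0..y} zeta_integrand"
    (is "_ \<le> ?K * ?I x * ?I y")
proof (cases "x = 0")
  case True
  then show ?thesis
    using assms by simp
next
  case False
  with assms have x: "0 < x" by simp
  have "?I (x * y) = x * integral {0..y} (\<lambda>v. zeta_integrand (x * v))"
    using x by (rule integral_stretch_from_0)
  also have "\<dots> \<le> x * integral {0..y} (\<lambda>v. ?K * zeta_integrand x * zeta_integrand v)"
    using assms x integrable_on_cmult_left[OF zeta_integrand_integrable, of "?K * zeta_integrand x"]
    by (intro mult_left_mono integral_le integrable_stretch_from_0 zeta_integrand_integrable
          zeta_integrand_mult_le) auto
  also have "\<dots> = ?K * (x * zeta_integrand x) * ?I y"
    by simp
  also have "\<dots> \<le> ?K * ?I x * ?I y"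
    using assms
    by (intro mult_right_mono mult_left_mono mult_le_integral_of_antimono zeta_integrand_integrable
          integral_nonneg zeta_integrand_antimono zeta_integrand_nonneg) auto
  finally show ?thesis .
qed

theorem mainTheorem4:
  shows "\<exists>C::real. \<forall>x\<in>{0..1}. \<forall>y\<in>{0..1}. zeta (x * y) \<le> C * zeta x * zeta y"
proof (intro exI ballI)
  fix x y :: real
  assume "x \<in> {0..1}" "y \<in> {0..1}"
  then have "integral {0..x * y} zeta_integrand
      \<le> sqrt (2 / ln 2) * integral {0..x} zeta_integrand * integral {0..y} zeta_integrand"
    by (intro integral_zeta_integrand_mult_le) auto
  then show "zeta (x * y) \<le> (2 * sqrt 2 * sqrt (2 / ln 2)) * zeta x * zeta y"
    unfolding zeta_eq_integral by (simp add: field_simps)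
qed

end
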